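(* There exist absolute constants $c_1,c_2>0$ such that for every sufficiently large $n$ there exists a monotone non-negative $\frac{c_1}{n}$-Lipschitz submodular function $f\colon\mathbb F_2^n\to[0,1]$ (a rescaled matroid rank function) with $R^{\to}_{1/3}(f^+)\ge c_2 n$.
   Context: Functions $f\colon 2^{[n]}\to\mathbb R$ are identified with functions on $\mathbb F_2^n$ via $x\leftrightarrow\{i:x_i=1\}$. $f$ is monotone if $f(A)\le f(B)$ for $A\subseteq B$; $\alpha$-Lipschitz if $|f(S\cup\{i\})-f(S)|\le\alpha$ for all $S$, $i$; submodular if $f(A\cup\{i\})-f(A)\ge f(B\cup\{i\})-f(B)$ for all $A\subseteq B\subseteq[n]$, $i\notin B$. The XOR-function of $f$ is $f^+(x,y)=f(x+y)$ (coordinatewise addition mod 2). Randomized one-way communication complexity: $R^{\to}_\delta(f^+)$ is the minimum, over public-coin randomized protocols in which Alice (holding $x\in\mathbb F_2^n$) sends a single message to Bob (holding $y\in\mathbb F_2^n$) who then outputs a value, such that for every $x,y$ Bob's output equals $f^+(x,y)$ with probability at least $1-\delta$, of the maximum message length in bits. *)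

theory Defs
  imports "HOL-Probability.Probability"
begin

text \<open>Vectors of F_2^n are identified with subsets of {..<n}; coordinatewise
addition mod 2 is symmetric difference.\<close>

definition xor_set :: "nat set \<Rightarrow> nat set \<Rightarrow> nat set" where
  "xor_set x y = (x - y) \<union> (y - x)"

definition monotone_setfun :: "nat \<Rightarrow> (nat set \<Rightarrow> real) \<Rightarrow> bool" where
  "monotone_setfun n f \<longleftrightarrow> (\<forall>A B. A \<subseteq> B \<and> B \<subseteq> {..<n} \<longrightarrow> f A \<le> f B)"

definition lipschitz_setfun :: "nat \<Rightarrow> real \<Rightarrow> (nat set \<Rightarrow> real) \<Rightarrow> bool" where
  "lipschitz_setfun n \<alpha> f \<longleftrightarrow>
     (\<forall>S i. S \<subseteq> {..<n} \<and> i < n \<longrightarrow> \<bar>f (insert i S) - f S\<bar> \<le> \<alpha>)"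

definition submodular_setfun :: "nat \<Rightarrow> (nat set \<Rightarrow> real) \<Rightarrow> bool" where
  "submodular_setfun n f \<longleftrightarrow>
     (\<forall>A B i. A \<subseteq> B \<and> B \<subseteq> {..<n} \<and> i < n \<and> i \<notin> B \<longrightarrow>
        f (insert i A) - f A \<ge> f (insert i B) - f B)"

definition is_matroid :: "nat \<Rightarrow> nat set set \<Rightarrow> bool" where
  "is_matroid n I \<longleftrightarrow>
     (\<forall>J\<in>I. J \<subseteq> {..<n}) \<and> {} \<in> I \<and>
     (\<forall>J K. J \<in> I \<and> K \<subseteq> J \<longrightarrow> K \<in> I) \<and>
     (\<forall>J K. J \<in> I \<and> K \<in> I \<and> card J < card K \<longrightarrow> (\<exists>e\<in>K - J. insert e J \<in> I))"

definition matroid_rank :: "nat set set \<Rightarrow> nat set \<Rightarrow> nat" where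
  "matroid_rank I S = Max {card J | J. J \<subseteq> S \<and> J \<in> I}"

text \<open>A public-coin
protocol is a probability distribution over deterministic one-way protocols
(a message function for Alice and an output function for Bob).\<close>

type_synonym det_oneway = "(nat set \<Rightarrow> bool list) \<times> (bool list \<Rightarrow> nat set \<Rightarrow> real)"

definition oneway_protocol_exists ::
  "nat \<Rightarrow> real \<Rightarrow> (nat set \<Rightarrow> nat set \<Rightarrow> real) \<Rightarrow> nat \<Rightarrow> bool" where
  "oneway_protocol_exists n \<delta> g k \<longleftrightarrow>
     (\<exists>p :: det_oneway pmf.
        (\<forall>P\<in>set_pmf p. \<forall>x. x \<subseteq> {..<n} \<longrightarrow> length (fst P x) \<le> k) \<and>
        (\<forall>x y. x \<subseteq> {..<n} \<and> y \<subseteq> {..<n} \<longrightarrow>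
            measure_pmf.prob p {P. snd P (fst P x) y = g x y} \<ge> 1 - \<delta>))"

definition R_oneway :: "nat \<Rightarrow> real \<Rightarrow> (nat set \<Rightarrow> nat set \<Rightarrow> real) \<Rightarrow> nat" where
  "R_oneway n \<delta> g = (LEAST k. oneway_protocol_exists n \<delta> g k)"

definition xor_function :: "(nat set \<Rightarrow> real) \<Rightarrow> nat set \<Rightarrow> nat set \<Rightarrow> real" where
  "xor_function f x y = f (xor_set x y)"

end

theory Submission
  imports Defs
begin

text \<open>The rescaled rank function of the free matroid, f S = |S| / n, already works: its XOR
function is the normalized Hamming distance of x and y.  Restrict Alice to the 2^(n/3) inputs
in which every coordinate is repeated three times.  Two distinct such inputs x, x' differ in
at least three coordinates, so |x + y| = |x' + y| for at most 3/8 of all y.  Fix one message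
of a deterministic one-way protocol; by Cauchy-Schwarz, Bob's single answer function agrees
with the true value on at most (5/8 |S| + 1) |Y| of the pairs (x, y) with x in the set S of
inputs sending that message.  Summing over messages, and averaging over the public coins, an
error of 1/3 forces 2^(n/3) to be at most a constant times the number of messages.\<close>

lemma xor_set_cancel [simp]: "xor_set w (xor_set w a) = a"
  by (auto simp: xor_set_def)

lemma binomial_three_le: "(3::nat) choose j \<le> 3"
proof (cases "j \<le> 3")
  case True
  then have "j \<in> {0, 1, 2, 3}" by auto
  then show ?thesis by (auto simp: numeral_eq_Suc)
qed (simp add: binomial_eq_0)

lemma card_subsets_xor_set_card_eq:
  assumes "finite T0" "w \<subseteq> T0"
  shows "card {T \<in> Pow T0. card (xor_set w T) = j} = card T0 choose j"
proof -
  have "bij_betw (xor_set w) {T \<in> Pow T0. card (xor_set w T) = j} {S. S \<subseteq> T0 \<and> card S = j}"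
  proof (rule bij_betw_byWitness[where f' = "xor_set w"])
    show "xor_set w ` {S. S \<subseteq> T0 \<and> card S = j} \<subseteq> {T \<in> Pow T0. card (xor_set w T) = j}"
    proof
      fix T assume "T \<in> xor_set w ` {S. S \<subseteq> T0 \<and> card S = j}"
      then obtain S where "S \<subseteq> T0" "card S = j" "T = xor_set w S" by auto
      moreover from this have "T \<subseteq> T0"
        using assms(2) by (auto simp: xor_set_def)
      ultimately show "T \<in> {T \<in> Pow T0. card (xor_set w T) = j}" by simp
    qed
  qed (use assms(2) in \<open>auto simp: xor_set_def\<close>)
  then show ?thesis
    using n_subsets[OF assms(1)] by (simp add: bij_betw_same_card)
qed

lemma card_xor_set_Un_split:
  assumes "z \<inter> T0 = {}" "T \<subseteq> T0" "finite x" "finite z" "finite T0"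
  shows "card (xor_set x (z \<union> T)) = card (xor_set x z - T0) + card (xor_set (x \<inter> T0) T)"
proof -
  have "xor_set x (z \<union> T) = (xor_set x z - T0) \<union> xor_set (x \<inter> T0) T"
    using assms(1,2) by (auto simp: xor_set_def)
  moreover have "(xor_set x z - T0) \<inter> xor_set (x \<inter> T0) T = {}"
    using assms(2) by (auto simp: xor_set_def)
  moreover have "finite (xor_set x z - T0)" "finite (xor_set (x \<inter> T0) T)"
    using assms finite_subset by (auto simp: xor_set_def)
  ultimately show ?thesis by (simp add: card_Un_disjoint)
qed

lemma card_equidistant_fiber_le:
  assumes T0: "card T0 = 3" "T0 \<subseteq> xor_set x x'"
    and fin: "finite x" "finite x'" "finite z" and z: "z \<inter> T0 = {}"
  shows "card {T \<in> Pow T0. card (xor_set x (z \<union> T)) = card (xor_set x' (z \<union> T))} \<le> 3"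
proof -
  have fT0: "finite T0" using T0(1) by (simp add: card_ge_0_finite)
  define w where "w = x \<inter> T0"
  have w: "w \<subseteq> T0" by (simp add: w_def)
  have x'T0: "x' \<inter> T0 = T0 - w" using T0(2) by (auto simp: w_def xor_set_def)
  \<comment> \<open>on the fibre over z, equidistance pins down the size of w + T\<close>
  define j where "j = (card (xor_set x' z - T0) + 3 - card (xor_set x z - T0)) div 2"
  have "card (xor_set w T) = j"
    if T: "T \<subseteq> T0" and eq: "card (xor_set x (z \<union> T)) = card (xor_set x' (z \<union> T))" for T
  proof -
    have sub: "xor_set w T \<subseteq> T0" using T w by (auto simp: xor_set_def)
    then have le3: "card (xor_set w T) \<le> 3" using card_mono[OF fT0] T0(1) by metis
    have "xor_set (x' \<inter> T0) T = T0 - xor_set w T"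
      using T w unfolding x'T0 by (auto simp: xor_set_def)
    then have "card (xor_set (x' \<inter> T0) T) = 3 - card (xor_set w T)"
      using sub fT0 T0(1) by (simp add: card_Diff_subset finite_subset)
    then have "card (xor_set x z - T0) + card (xor_set w T)
        = card (xor_set x' z - T0) + (3 - card (xor_set w T))"
      using eq card_xor_set_Un_split[OF z T _ fin(3) fT0] fin(1,2) by (simp add: w_def)
    then have "card (xor_set x' z - T0) + 3 - card (xor_set x z - T0) = 2 * card (xor_set w T)"
      using le3 by linarith
    then show ?thesis unfolding j_def by simp
  qed
  then have "card {T \<in> Pow T0. card (xor_set x (z \<union> T)) = card (xor_set x' (z \<union> T))}
      \<le> card {T \<in> Pow T0. card (xor_set w T) = j}"
    by (intro card_mono) (auto simp: fT0)
  also have "\<dots> = 3 choose j"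
    using card_subsets_xor_set_card_eq[OF fT0 w] T0(1) by simp
  finally show ?thesis using binomial_three_le order_trans by blast
qed

lemma card_Pow_filter_split:
  assumes "finite U" "T0 \<subseteq> U"
  shows "card {y \<in> Pow U. P y} = (\<Sum>z\<in>Pow (U - T0). card {T \<in> Pow T0. P (z \<union> T)})"
proof -
  have "bij_betw (\<lambda>(z, T). z \<union> T) (SIGMA z:Pow (U - T0). {T \<in> Pow T0. P (z \<union> T)})
      {y \<in> Pow U. P y}"
  proof (rule bij_betw_byWitness[where f' = "\<lambda>y. (y - T0, y \<inter> T0)"])
    show "(\<lambda>y. (y - T0, y \<inter> T0)) ` {y \<in> Pow U. P y}
        \<subseteq> (SIGMA z:Pow (U - T0). {T \<in> Pow T0. P (z \<union> T)})"
      by (auto simp: Un_Diff_Int)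
  qed (use assms(2) in auto)
  then have "card {y \<in> Pow U. P y} = card (SIGMA z:Pow (U - T0). {T \<in> Pow T0. P (z \<union> T)})"
    by (simp add: bij_betw_same_card)
  also have "\<dots> = (\<Sum>z\<in>Pow (U - T0). card {T \<in> Pow T0. P (z \<union> T)})"
    using assms finite_subset[OF assms(2,1)]
    by (subst card_SigmaI) (auto simp: finite_Collect_conjI finite_Collect_subsets)
  finally show ?thesis .
qed

lemma card_equidistant_le:
  assumes U: "finite U" "x \<subseteq> U" "x' \<subseteq> U" and T0: "card T0 = 3" "T0 \<subseteq> xor_set x x'"
  shows "8 * card {y \<in> Pow U. card (xor_set x y) = card (xor_set x' y)} \<le> 3 * 2 ^ card U"
proof -
  have T0U: "T0 \<subseteq> U" using T0(2) U(2,3) by (auto simp: xor_set_def)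
  have fin: "finite x" "finite x'" using U finite_subset by auto
  have "card {y \<in> Pow U. card (xor_set x y) = card (xor_set x' y)}
      = (\<Sum>z\<in>Pow (U - T0). card {T \<in> Pow T0. card (xor_set x (z \<union> T)) = card (xor_set x' (z \<union> T))})"
    by (rule card_Pow_filter_split[OF U(1) T0U])
  also have "\<dots> \<le> (\<Sum>z\<in>Pow (U - T0). 3)"
    using U(1) by (intro sum_mono card_equidistant_fiber_le[OF T0 fin]) (auto intro: finite_subset)
  also have "\<dots> = 3 * 2 ^ (card U - 3)"
    using U(1) T0U T0(1) by (simp add: card_Pow card_Diff_subset card_ge_0_finite)
  finally have "8 * card {y \<in> Pow U. card (xor_set x y) = card (xor_set x' y)} \<le> 3 * (2 ^ 3 * 2 ^ (card U - 3))"
    by simp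
  also have "\<dots> = 3 * 2 ^ card U"
  proof -
    obtain m where "card U = 3 + m" using card_mono[OF U(1) T0U] T0(1) le_Suc_ex by metis
    then show ?thesis by (simp add: power_add)
  qed
  finally show ?thesis .
qed

lemma agreements_one_message_le:
  fixes S :: "'a set" and Y :: "'b set" and h :: "'b \<Rightarrow> 'c" and g :: "'a \<Rightarrow> 'b \<Rightarrow> 'c"
  assumes fS: "finite S" and fY: "finite Y"
    and coll: "\<And>x x'. x \<in> S \<Longrightarrow> x' \<in> S \<Longrightarrow> x \<noteq> x' \<Longrightarrow>
       8 * (\<Sum>y\<in>Y. of_bool (g x y = g x' y)) \<le> 3 * real (card Y)"
  shows "(\<Sum>x\<in>S. \<Sum>y\<in>Y. of_bool (h y = g x y) :: real) \<le> real (card Y) * (5/8 * real (card S) + 1)"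
proof -
  define N where "N y = (\<Sum>x\<in>S. of_bool (h y = g x y) :: real)" for y
  define cY where "cY = real (card Y)"
  define s where "s = real (card S)"
  have sq: "(N y)\<^sup>2 \<le> (\<Sum>x\<in>S. \<Sum>x'\<in>S. of_bool (g x y = g x' y))" for y
  proof -
    have "(N y)\<^sup>2 = (\<Sum>x\<in>S. \<Sum>x'\<in>S. of_bool (h y = g x y) * of_bool (h y = g x' y))"
      by (simp add: N_def power2_eq_square sum_product)
    also have "\<dots> \<le> (\<Sum>x\<in>S. \<Sum>x'\<in>S. of_bool (g x y = g x' y))"
      by (intro sum_mono) auto
    finally show ?thesis .
  qed
  have pair: "(\<Sum>y\<in>Y. of_bool (g x y = g x' y)) \<le> (if x' = x then cY else 0) + 3/8 * cY"
    if "x \<in> S" "x' \<in> S" for x x'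
    using coll[OF that] by (cases "x' = x") (auto simp: cY_def)
  have "(\<Sum>y\<in>Y. (N y)\<^sup>2) \<le> (\<Sum>y\<in>Y. \<Sum>x\<in>S. \<Sum>x'\<in>S. of_bool (g x y = g x' y))"
    by (intro sum_mono sq)
  also have "\<dots> = (\<Sum>x\<in>S. \<Sum>x'\<in>S. \<Sum>y\<in>Y. of_bool (g x y = g x' y))"
    by (subst sum.swap) (intro sum.cong refl sum.swap)
  also have "\<dots> \<le> (\<Sum>x\<in>S. \<Sum>x'\<in>S. (if x' = x then cY else 0) + 3/8 * cY)"
    by (intro sum_mono pair)
  also have "\<dots> = cY * (s + 3/8 * s\<^sup>2)"
    using fS by (simp add: sum.distrib s_def power2_eq_square algebra_simps)
  finally have sum_sq: "(\<Sum>y\<in>Y. (N y)\<^sup>2) \<le> cY * (s + 3/8 * s\<^sup>2)" .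
  have "(\<Sum>y\<in>Y. N y)\<^sup>2 \<le> (\<Sum>y\<in>Y. (N y)\<^sup>2) * cY"
    unfolding cY_def by (rule sum_squared_le_sum_of_squares)
  also have "\<dots> \<le> cY * (s + 3/8 * s\<^sup>2) * cY"
    using sum_sq by (rule mult_right_mono) (simp add: cY_def)
  also have "\<dots> \<le> (cY * (5/8 * s + 1))\<^sup>2"
  proof -
    have "(cY * (5/8 * s + 1))\<^sup>2 - cY * (s + 3/8 * s\<^sup>2) * cY = cY\<^sup>2 * (s\<^sup>2 / 64 + s / 4 + 1)"
      by (simp add: power2_eq_square algebra_simps)
    moreover have "0 \<le> cY\<^sup>2 * (s\<^sup>2 / 64 + s / 4 + 1)"
      by (simp add: s_def)
    ultimately show ?thesis by linarith
  qed
  finally have "(\<Sum>y\<in>Y. N y) \<le> cY * (5/8 * s + 1)"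
    by (rule power2_le_imp_le) (simp add: cY_def s_def)
  then show ?thesis
    unfolding N_def cY_def s_def by (subst sum.swap)
qed

lemma agreements_deterministic_protocol_le:
  fixes X :: "'a set" and Y :: "'b set" and A :: "'a \<Rightarrow> 'm" and B :: "'m \<Rightarrow> 'b \<Rightarrow> 'c"
    and g :: "'a \<Rightarrow> 'b \<Rightarrow> 'c"
  assumes fX: "finite X" and fY: "finite Y"
    and coll: "\<And>x x'. x \<in> X \<Longrightarrow> x' \<in> X \<Longrightarrow> x \<noteq> x' \<Longrightarrow>
       8 * (\<Sum>y\<in>Y. of_bool (g x y = g x' y)) \<le> 3 * real (card Y)"
  shows "(\<Sum>x\<in>X. \<Sum>y\<in>Y. of_bool (B (A x) y = g x y) :: real)
           \<le> real (card Y) * (5/8 * real (card X) + real (card (A ` X)))"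
proof -
  define S where "S m = {x \<in> X. A x = m}" for m
  have fS: "finite (S m)" for m using fX by (simp add: S_def)
  have "(\<Sum>x\<in>X. \<Sum>y\<in>Y. of_bool (B (A x) y = g x y) :: real)
      = (\<Sum>m\<in>A ` X. \<Sum>x\<in>S m. \<Sum>y\<in>Y. of_bool (B m y = g x y))"
    unfolding S_def by (subst sum.image_gen[OF fX]) (auto intro!: sum.cong)
  also have "\<dots> \<le> (\<Sum>m\<in>A ` X. real (card Y) * (5/8 * real (card (S m)) + 1))"
    by (intro sum_mono agreements_one_message_le[OF fS fY]) (auto simp: S_def intro: coll)
  also have "\<dots> = real (card Y) * (5/8 * (\<Sum>m\<in>A ` X. real (card (S m))) + real (card (A ` X)))"
    by (simp add: sum_distrib_left sum.distrib algebra_simps)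
  also have "(\<Sum>m\<in>A ` X. real (card (S m))) = real (card X)"
    using sum.image_gen[OF fX, of "\<lambda>_. 1 :: real" A] by (simp add: S_def)
  finally show ?thesis .
qed

lemma exists_support_sum_gt:
  fixes p :: "'a pmf" and Q :: "'b \<Rightarrow> 'a \<Rightarrow> bool"
  assumes "finite Z" "Z \<noteq> {}" "r < q" and prob: "\<And>z. z \<in> Z \<Longrightarrow> measure_pmf.prob p {P. Q z P} \<ge> q"
  shows "\<exists>P\<in>set_pmf p. (\<Sum>z\<in>Z. of_bool (Q z P) :: real) > r * real (card Z)"
proof (rule ccontr)
  assume "\<not> ?thesis"
  then have le: "(\<Sum>z\<in>Z. of_bool (Q z P) :: real) \<le> r * real (card Z)" if "P \<in> set_pmf p" for P
    using that by (auto simp: not_less)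
  have of_bool_eq_indicator: "(\<lambda>P. of_bool (Q z P) :: real) = indicator {P. Q z P}" for z
    by (auto simp: indicator_def)
  have integrable_of_bool: "integrable (measure_pmf p) (\<lambda>P. of_bool (Q z P) :: real)" for z
    by (rule measure_pmf.integrable_const_bound[where B = 1]) auto
  have "q * real (card Z) = (\<Sum>z\<in>Z. q)"
    by simp
  also have "\<dots> \<le> (\<Sum>z\<in>Z. measure_pmf.prob p {P. Q z P})"
    by (intro sum_mono prob)
  also have "\<dots> = (\<Sum>z\<in>Z. measure_pmf.expectation p (\<lambda>P. of_bool (Q z P) :: real))"
    by (simp add: of_bool_eq_indicator)
  also have "\<dots> = measure_pmf.expectation p (\<lambda>P. \<Sum>z\<in>Z. of_bool (Q z P) :: real)"
    by (rule Bochner_Integration.integral_sum[symmetric]) (rule integrable_of_bool)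
  also have "\<dots> \<le> r * real (card Z)"
    by (intro measure_pmf.integral_le_const Bochner_Integration.integrable_sum integrable_of_bool AE_pmfI le)
  finally show False
    using assms(1-3) by (simp add: card_gt_0_iff)
qed

lemma card_image_lists_length_le_less:
  assumes "\<And>x. x \<in> X \<Longrightarrow> length (A x) \<le> k"
  shows "card ((A :: 'a \<Rightarrow> bool list) ` X) < 2 ^ Suc k"
proof -
  have "card (A ` X) \<le> card {xs :: bool list. set xs \<subseteq> UNIV \<and> length xs \<le> k}"
    using assms by (intro card_mono finite_lists_length_le) auto
  also have "\<dots> = (\<Sum>i\<le>k. 2 ^ i)"
    using card_lists_length_le[of "UNIV :: bool set" k] by simp
  also have "\<dots> < 2 ^ Suc k"
    by (induction k) auto
  finally show ?thesis .
qed

lemma oneway_protocol_code_bound: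
  assumes prot: "oneway_protocol_exists n (1/3) g k"
    and X: "finite X" "X \<subseteq> Pow {..<n}"
    and coll: "\<And>x x'. x \<in> X \<Longrightarrow> x' \<in> X \<Longrightarrow> x \<noteq> x' \<Longrightarrow>
       8 * (\<Sum>y\<in>Pow {..<n}. of_bool (g x y = g x' y)) \<le> 3 * real (card (Pow {..<n}))"
  shows "card X < 40 * 2 ^ Suc k"
proof (cases "X = {}")
  case nonempty: False
  define Y where "Y = Pow {..<n :: nat}"
  have fY: "finite Y" and cY: "real (card Y) > 0"
    by (auto simp: Y_def card_gt_0_iff)
  obtain p :: "det_oneway pmf" where
    len: "\<And>P x. P \<in> set_pmf p \<Longrightarrow> x \<subseteq> {..<n} \<Longrightarrow> length (fst P x) \<le> k" and
    cor: "\<And>x y. x \<subseteq> {..<n} \<Longrightarrow> y \<subseteq> {..<n} \<Longrightarrow>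
      measure_pmf.prob p {P. snd P (fst P x) y = g x y} \<ge> 2/3"
    using prot unfolding oneway_protocol_exists_def by fastforce
  have "\<exists>P\<in>set_pmf p. (\<Sum>xy\<in>X \<times> Y. of_bool (snd P (fst P (fst xy)) (snd xy) = g (fst xy) (snd xy)) :: real)
      > 13/20 * real (card (X \<times> Y))"
  proof (rule exists_support_sum_gt[where q = "2/3"])
    show "finite (X \<times> Y)" "X \<times> Y \<noteq> {}"
      using X(1) fY nonempty by (auto simp: Y_def)
  qed (use X(2) cor in \<open>auto simp: Y_def\<close>)
  then obtain P where P: "P \<in> set_pmf p" and
    agree: "13/20 * real (card (X \<times> Y))
      < (\<Sum>xy\<in>X \<times> Y. of_bool (snd P (fst P (fst xy)) (snd xy) = g (fst xy) (snd xy)))"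
    by blast
  note agree
  also have "\<dots> = (\<Sum>x\<in>X. \<Sum>y\<in>Y. of_bool (snd P (fst P x) y = g x y))"
    by (simp add: sum.cartesian_product case_prod_beta)
  also have "\<dots> \<le> real (card Y) * (5/8 * real (card X) + real (card (fst P ` X)))"
    using coll unfolding Y_def by (intro agreements_deterministic_protocol_le[OF X(1)]) auto
  finally have "real (card Y) * (real (card X) - 40 * real (card (fst P ` X))) < 0"
    by (simp add: card_cartesian_product algebra_simps)
  then have "card X < 40 * card (fst P ` X)"
    using cY by (simp add: mult_less_0_iff)
  moreover have "card (fst P ` X) < 2 ^ Suc k"
    using len[OF P] X(2) by (intro card_image_lists_length_le_less) auto
  ultimately show ?thesis by linarith
qed simp

definition triple :: "nat set \<Rightarrow> nat set" where
  "triple z = {i. i div 3 \<in> z}"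

lemma mem_triple_iff: "r < 3 \<Longrightarrow> 3 * j + r \<in> triple z \<longleftrightarrow> j \<in> z"
  by (simp add: triple_def)

lemma inj_triple: "inj triple"
proof (rule injI)
  have "z = {j. 3 * j \<in> triple z}" for z
    by (simp add: triple_def)
  then show "triple z = triple z' \<Longrightarrow> z = z'" for z z'
    by metis
qed

lemma triple_subset_lessThan: "z \<subseteq> {..<L} \<Longrightarrow> triple z \<subseteq> {..<3 * L}"
  by (auto simp: triple_def)

lemma xor_set_triple:
  assumes "j \<in> xor_set z z'"
  shows "{3 * j, 3 * j + 1, 3 * j + 2} \<subseteq> xor_set (triple z) (triple z')"
  using assms mem_triple_iff[of 0 j] mem_triple_iff[of 1 j] mem_triple_iff[of 2 j]
  by (auto simp: xor_set_def)

definition normalized_card :: "nat \<Rightarrow> nat set \<Rightarrow> real" where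
  "normalized_card n S = real (card S) / real n"

lemma oneway_normalized_card_lower_bound:
  assumes n: "n > 0" and prot: "oneway_protocol_exists n (1/3) (xor_function (normalized_card n)) k"
  shows "n div 3 < k + 7"
proof -
  define L where "L = n div 3"
  define X where "X = triple ` Pow {..<L}"
  have "triple z \<subseteq> {..<n}" if "z \<subseteq> {..<L}" for z
    using triple_subset_lessThan[OF that] by (auto simp: L_def)
  then have X: "finite X" "X \<subseteq> Pow {..<n}"
    by (auto simp: X_def)
  have "card X < 40 * 2 ^ Suc k"
  proof (rule oneway_protocol_code_bound[OF prot X])
    fix x x' assume xX: "x \<in> X" "x' \<in> X" and "x \<noteq> x'"
    then obtain z z' where z: "x = triple z" "x' = triple z'"
      by (auto simp: X_def)
    with \<open>x \<noteq> x'\<close> have "z \<noteq> z'"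
      by blast
    then obtain j where "j \<in> xor_set z z'"
      by (auto simp: xor_set_def)
    then have T0: "{3 * j, 3 * j + 1, 3 * j + 2} \<subseteq> xor_set x x'"
      unfolding z by (rule xor_set_triple)
    define E where "E = {y \<in> Pow {..<n}. card (xor_set x y) = card (xor_set x' y)}"
    have "8 * card E \<le> 3 * 2 ^ card {..<n}"
      unfolding E_def using xX X(2) by (intro card_equidistant_le[OF _ _ _ _ T0]) auto
    then have "real (8 * card E) \<le> real (3 * 2 ^ n)"
      by (simp only: card_lessThan of_nat_le_iff)
    moreover have "(\<Sum>y\<in>Pow {..<n}. of_bool (xor_function (normalized_card n) x y
        = xor_function (normalized_card n) x' y)) = real (card E)"
      using n by (simp add: E_def xor_function_def normalized_card_def sum_of_bool_eq Int_def)
    ultimately show "8 * (\<Sum>y\<in>Pow {..<n}. of_bool (xor_function (normalized_card n) x y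
        = xor_function (normalized_card n) x' y)) \<le> 3 * real (card (Pow {..<n}))"
      by (simp add: card_Pow)
  qed
  moreover have "card X = 2 ^ L"
    using inj_triple by (simp add: X_def card_image inj_on_subset card_Pow)
  ultimately have "(2::nat) ^ L < 2 ^ (k + 7)"
    by (simp add: power_add)
  then show ?thesis
    unfolding L_def using power_less_imp_less_exp by fastforce
qed

lemma oneway_protocol_exists_send_input:
  assumes "0 \<le> \<delta>"
  shows "oneway_protocol_exists n \<delta> g n"
proof -
  define enc where "enc x = map (\<lambda>i. i \<in> x) [0..<n]" for x :: "nat set"
  define dec where "dec m y = g {i. i < length m \<and> m ! i} y" for m y
  have "dec (enc x) y = g x y" if "x \<subseteq> {..<n}" for x y
    using that by (auto simp: enc_def dec_def intro!: arg_cong[where f = "\<lambda>x. g x y"])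
  then show ?thesis
    using assms unfolding oneway_protocol_exists_def
    by (intro exI[where x = "return_pmf (enc, dec)"]) (auto simp: enc_def indicator_def)
qed

lemma oneway_protocol_exists_R_oneway:
  "0 \<le> \<delta> \<Longrightarrow> oneway_protocol_exists n \<delta> g (R_oneway n \<delta> g)"
  unfolding R_oneway_def by (rule LeastI, rule oneway_protocol_exists_send_input)

lemma R_oneway_normalized_card_ge:
  assumes "n > 0"
  shows "n div 3 < R_oneway n (1/3) (xor_function (normalized_card n)) + 7"
  using assms oneway_protocol_exists_R_oneway by (intro oneway_normalized_card_lower_bound) auto

lemma is_matroid_Pow: "is_matroid n (Pow {..<n})"
  unfolding is_matroid_def
proof (intro conjI allI impI ballI)
  fix J K assume "J \<in> Pow {..<n} \<and> K \<in> Pow {..<n} \<and> card J < card K"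
  moreover from this have "\<not> K \<subseteq> J"
    by (meson PowD card_mono finite_lessThan finite_subset not_le)
  ultimately show "\<exists>e\<in>K - J. insert e J \<in> Pow {..<n}"
    by auto
qed auto

lemma matroid_rank_Pow:
  assumes "S \<subseteq> {..<n}"
  shows "matroid_rank (Pow {..<n}) S = card S"
  unfolding matroid_rank_def
proof (rule Max_eqI)
  have "{card J |J. J \<subseteq> S \<and> J \<in> Pow {..<n}} \<subseteq> card ` Pow S"
    by auto
  then show "finite {card J |J. J \<subseteq> S \<and> J \<in> Pow {..<n}}"
    using assms by (meson finite_Pow_iff finite_imageI finite_lessThan finite_subset)
  show "card S \<in> {card J |J. J \<subseteq> S \<and> J \<in> Pow {..<n}}"
    using assms by auto
  have "finite S"
    using assms finite_subset by blast
  then show "y \<le> card S" if "y \<in> {card J |J. J \<subseteq> S \<and> J \<in> Pow {..<n}}" for y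
    using that card_mono by blast
qed

lemma normalized_card_bounds:
  assumes "S \<subseteq> {..<n}"
  shows "0 \<le> normalized_card n S \<and> normalized_card n S \<le> 1"
proof -
  have "card S \<le> n"
    using card_mono[OF finite_lessThan assms] by simp
  then show ?thesis
    by (cases "n = 0") (simp_all add: normalized_card_def divide_le_eq_1)
qed

lemma monotone_normalized_card: "monotone_setfun n (normalized_card n)"
  unfolding monotone_setfun_def normalized_card_def
proof (intro allI impI)
  fix A B :: "nat set" assume "A \<subseteq> B \<and> B \<subseteq> {..<n}"
  then have "card A \<le> card B"
    by (meson card_mono finite_lessThan finite_subset)
  then show "real (card A) / real n \<le> real (card B) / real n"
    by (simp add: divide_right_mono)
qed

lemma lipschitz_normalized_card: "lipschitz_setfun n (1 / real n) (normalized_card n)"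
  unfolding lipschitz_setfun_def normalized_card_def
proof (intro allI impI)
  fix S :: "nat set" and i assume "S \<subseteq> {..<n} \<and> i < n"
  then have "finite S"
    using finite_subset by blast
  then have "\<bar>real (card (insert i S)) - real (card S)\<bar> \<le> 1"
    by (simp add: card_insert_if)
  then have "\<bar>real (card (insert i S)) - real (card S)\<bar> / real n \<le> 1 / real n"
    by (rule divide_right_mono) simp
  then show "\<bar>real (card (insert i S)) / real n - real (card S) / real n\<bar> \<le> 1 / real n"
    by (simp only: diff_divide_distrib[symmetric] abs_divide abs_of_nat)
qed

lemma submodular_normalized_card: "submodular_setfun n (normalized_card n)"
  unfolding submodular_setfun_def normalized_card_def
proof (intro allI impI)
  fix A B :: "nat set" and i assume h: "A \<subseteq> B \<and> B \<subseteq> {..<n} \<and> i < n \<and> i \<notin> B"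
  then have "finite A" "finite B" "i \<notin> A"
    using finite_subset[of _ "{..<n}"] by auto
  then have "card (insert i A) = card A + 1" "card (insert i B) = card B + 1"
    using h by simp_all
  then show "real (card (insert i B)) / real n - real (card B) / real n
      \<le> real (card (insert i A)) / real n - real (card A) / real n"
    by (simp add: diff_divide_distrib[symmetric])
qed

theorem mainTheorem12:
  shows "\<exists>c1 c2 :: real. c1 > 0 \<and> c2 > 0 \<and>
    (\<exists>N::nat. \<forall>n\<ge>N. \<exists>f :: nat set \<Rightarrow> real.
       monotone_setfun n f \<and>
       (\<forall>S. S \<subseteq> {..<n} \<longrightarrow> 0 \<le> f S \<and> f S \<le> 1) \<and>
       lipschitz_setfun n (c1 / real n) f \<and>
       submodular_setfun n f \<and>
       (\<exists>I t. is_matroid n I \<and> t > 0 \<and>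
          (\<forall>S. S \<subseteq> {..<n} \<longrightarrow> f S = t * real (matroid_rank I S))) \<and>
       real (R_oneway n (1/3) (xor_function f)) \<ge> c2 * real n)"
proof (rule exI[where x = 1], rule exI[where x = "1/6"], intro conjI exI[where x = 42] allI impI)
  fix n :: nat assume n: "42 \<le> n"
  have "n div 3 < R_oneway n (1/3) (xor_function (normalized_card n)) + 7"
    using n by (intro R_oneway_normalized_card_ge) simp
  then have R: "1/6 * real n \<le> real (R_oneway n (1/3) (xor_function (normalized_card n)))"
    using n by linarith
  show "\<exists>f. monotone_setfun n f \<and>
       (\<forall>S. S \<subseteq> {..<n} \<longrightarrow> 0 \<le> f S \<and> f S \<le> 1) \<and>
       lipschitz_setfun n (1 / real n) f \<and>
       submodular_setfun n f \<and>
       (\<exists>I t. is_matroid n I \<and> t > 0 \<and>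
          (\<forall>S. S \<subseteq> {..<n} \<longrightarrow> f S = t * real (matroid_rank I S))) \<and>
       1/6 * real n \<le> real (R_oneway n (1/3) (xor_function f))"
  proof (intro exI[where x = "normalized_card n"] conjI exI[where x = "Pow {..<n}"]
      exI[where x = "1 / real n"])
    show "1 / real n > 0"
      using n by simp
    show "\<forall>S. S \<subseteq> {..<n} \<longrightarrow> 0 \<le> normalized_card n S \<and> normalized_card n S \<le> 1"
      using normalized_card_bounds by blast
    show "lipschitz_setfun n (1 / real n) (normalized_card n)"
      by (rule lipschitz_normalized_card)
    show "monotone_setfun n (normalized_card n)"
      by (rule monotone_normalized_card)
    show "submodular_setfun n (normalized_card n)"
      by (rule submodular_normalized_card)
    show "is_matroid n (Pow {..<n})"
      by (rule is_matroid_Pow)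
    show "1/6 * real n \<le> real (R_oneway n (1/3) (xor_function (normalized_card n)))"
      by (fact R)
    show "\<forall>S. S \<subseteq> {..<n} \<longrightarrow>
        normalized_card n S = 1 / real n * real (matroid_rank (Pow {..<n}) S)"
      by (simp add: matroid_rank_Pow normalized_card_def)
  qed
qed simp_all

end
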